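(* Let $\Sigma_C\subseteq N_C$ and $\Sigma_R\subseteq N_R$ be finite, let $B\in N_C\setminus\Sigma_C$, and let $\mathcal R$ be the TBox consisting of the axioms $B\sqsubseteq A$ for every $A\in\Sigma_C$ and $B\sqsubseteq\forall r.B$ for every $r\in\Sigma_R$. Let $\mathcal J$ be a model of $\mathcal R$ and $\mathcal I$ an interpretation with $\Delta^{\mathcal I}=\Delta^{\mathcal J}\setminus B^{\mathcal J}$, $A^{\mathcal I}=A^{\mathcal J}\setminus B^{\mathcal J}$ for every $A\in N_C$, and $r^{\mathcal I}=\{(x,y)\in r^{\mathcal J}\mid x\notin B^{\mathcal J},\ y\notin B^{\mathcal J}\}$ for every $r\in N_R$. Then for every word $w\in\Sigma_R^*$ and every $\mathcal{FL}_{\bot\mathit{reg}}$ concept description $M$ containing only concept names from $\Sigma_C$ and role names from $\Sigma_R$ such that $M^{\mathcal I}=(M^B)^{\mathcal J}\setminus B^{\mathcal J}$, we also have $(\forall w.M)^{\mathcal I}=(\forall w.M^B)^{\mathcal J}\setminus B^{\mathcal J}$. Here $M^B$ is obtained from $M$ by replacing every occurrence of $\bot$ with $B$, and $w$ is regarded as a regular role expression.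
   Context: Let $N_C$ and $N_R$ be disjoint countably infinite sets of concept names and role names. Regular role expressions are generated by $E ::= \emptyset \mid \varepsilon \mid r \mid (E+E) \mid (EE) \mid E^{*}$ with $r\in N_R$, with languages $\mathcal L(E)\subseteq N_R^*$. $\mathcal{FL}_{\bot\mathit{reg}}$ concept descriptions: $C ::= A \mid \top \mid \bot \mid (C\sqcap C) \mid \forall E.C$ with $A\in N_C$. An interpretation $\mathcal I$ has a domain $\Delta^{\mathcal I}$, $A^{\mathcal I}\subseteq\Delta^{\mathcal I}$, $r^{\mathcal I}\subseteq(\Delta^{\mathcal I})^2$; $E^{\mathcal I}$ is the union over $r_1\cdots r_n\in\mathcal L(E)$ of $r_1^{\mathcal I}\circ\cdots\circ r_n^{\mathcal I}$ (identity for the empty word); $\top^{\mathcal I}=\Delta^{\mathcal I}$, $\bot^{\mathcal I}=\emptyset$, $\sqcap$ is intersection, $(\forall E.C)^{\mathcal I}=\{x\in\Delta^{\mathcal I}\mid y\in C^{\mathcal I}$ whenever $(x,y)\in E^{\mathcal I}\}$. $\mathcal J$ is a model of a TBox (finite set of axioms $K\sqsubseteq M$) if $K^{\mathcal J}\subseteq M^{\mathcal J}$ for all its axioms. *)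

theory Defs
  imports Main
begin

datatype 'r rexp = RNone | REps | RAtom 'r | RPlus "'r rexp" "'r rexp"
  | RTimes "'r rexp" "'r rexp" | RStar "'r rexp"

inductive_set star_lang :: "'a list set \<Rightarrow> 'a list set" for L where
  star_nil: "[] \<in> star_lang L"
| star_app: "u \<in> L \<Longrightarrow> v \<in> star_lang L \<Longrightarrow> u @ v \<in> star_lang L"

fun lang :: "'r rexp \<Rightarrow> 'r list set" where
  "lang RNone = {}"
| "lang REps = {[]}"
| "lang (RAtom r) = {[r]}"
| "lang (RPlus E F) = lang E \<union> lang F"
| "lang (RTimes E F) = {u @ v | u v. u \<in> lang E \<and> v \<in> lang F}"
| "lang (RStar E) = star_lang (lang E)"

fun rnames_rexp :: "'r rexp \<Rightarrow> 'r set" where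
  "rnames_rexp RNone = {}"
| "rnames_rexp REps = {}"
| "rnames_rexp (RAtom r) = {r}"
| "rnames_rexp (RPlus E F) = rnames_rexp E \<union> rnames_rexp F"
| "rnames_rexp (RTimes E F) = rnames_rexp E \<union> rnames_rexp F"
| "rnames_rexp (RStar E) = rnames_rexp E"

fun word_rexp :: "'r list \<Rightarrow> 'r rexp" where
  "word_rexp [] = REps"
| "word_rexp (r # w) = RTimes (RAtom r) (word_rexp w)"

datatype ('c, 'r) concept = CName 'c | CTop | CBot
  | CAnd "('c, 'r) concept" "('c, 'r) concept"
  | CAll "'r rexp" "('c, 'r) concept"

fun cnames :: "('c, 'r) concept \<Rightarrow> 'c set" where
  "cnames (CName A) = {A}"
| "cnames CTop = {}"
| "cnames CBot = {}"
| "cnames (CAnd C D) = cnames C \<union> cnames D"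
| "cnames (CAll E C) = cnames C"

fun rnames :: "('c, 'r) concept \<Rightarrow> 'r set" where
  "rnames (CName A) = {}"
| "rnames CTop = {}"
| "rnames CBot = {}"
| "rnames (CAnd C D) = rnames C \<union> rnames D"
| "rnames (CAll E C) = rnames_rexp E \<union> rnames C"

fun replace_bot :: "'c \<Rightarrow> ('c, 'r) concept \<Rightarrow> ('c, 'r) concept" where
  "replace_bot B (CName A) = CName A"
| "replace_bot B CTop = CTop"
| "replace_bot B CBot = CName B"
| "replace_bot B (CAnd C D) = CAnd (replace_bot B C) (replace_bot B D)"
| "replace_bot B (CAll E C) = CAll E (replace_bot B C)"

record ('c, 'r, 'd) interp =
  dom :: "'d set"
  cint :: "'c \<Rightarrow> 'd set"
  rint :: "'r \<Rightarrow> ('d \<times> 'd) set"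

definition is_interp :: "('c, 'r, 'd) interp \<Rightarrow> bool" where
  "is_interp I \<longleftrightarrow> (\<forall>A. cint I A \<subseteq> dom I) \<and> (\<forall>r. rint I r \<subseteq> dom I \<times> dom I)"

fun word_int :: "('c, 'r, 'd) interp \<Rightarrow> 'r list \<Rightarrow> ('d \<times> 'd) set" where
  "word_int I [] = Id_on (dom I)"
| "word_int I (r # w) = rint I r O word_int I w"

definition rexp_int :: "('c, 'r, 'd) interp \<Rightarrow> 'r rexp \<Rightarrow> ('d \<times> 'd) set" where
  "rexp_int I E = (\<Union>w \<in> lang E. word_int I w)"

fun cext :: "('c, 'r, 'd) interp \<Rightarrow> ('c, 'r) concept \<Rightarrow> 'd set" where
  "cext I (CName A) = cint I A"
| "cext I CTop = dom I"
| "cext I CBot = {}"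
| "cext I (CAnd C D) = cext I C \<inter> cext I D"
| "cext I (CAll E C) = {x \<in> dom I. \<forall>y. (x, y) \<in> rexp_int I E \<longrightarrow> y \<in> cext I C}"

type_synonym ('c, 'r) tbox = "(('c, 'r) concept \<times> ('c, 'r) concept) set"

definition is_model :: "('c, 'r, 'd) interp \<Rightarrow> ('c, 'r) tbox \<Rightarrow> bool" where
  "is_model J T \<longleftrightarrow> is_interp J \<and> (\<forall>(K, M) \<in> T. cext J K \<subseteq> cext J M)"

end

theory Submission
  imports Defs
begin

text \<open>In a model \<open>J\<close> of the TBox, the extension of \<open>B\<close> is contained in every \<open>\<Sigma>\<^sub>C\<close>-name and
  closed under \<open>\<Sigma>\<^sub>R\<close>-successors; hence it lies inside \<open>(M\<^sup>B)\<^sup>J\<close>, and every \<open>w\<close>-path of \<open>J\<close>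
  that enters \<open>B\<close> stays in \<open>B\<close> and ends in \<open>(M\<^sup>B)\<^sup>J\<close>. So for \<open>x \<notin> B\<^sup>J\<close>, only the \<open>w\<close>-paths
  avoiding \<open>B\<^sup>J\<close>, which are exactly the \<open>w\<close>-paths of \<open>I\<close>, matter for \<open>x \<in> (\<forall>w.M\<^sup>B)\<^sup>J\<close>.\<close>

definition closed_under_roles :: "('c, 'r, 'd) interp \<Rightarrow> 'r set \<Rightarrow> 'd set \<Rightarrow> bool" where
  "closed_under_roles J R S \<longleftrightarrow> (\<forall>r\<in>R. rint J r `` S \<subseteq> S)"

lemma lang_word_rexp: "lang (word_rexp w) = {w}"
  by (induction w) auto

lemma set_subset_rnames_rexp_if_in_lang: "u \<in> lang E \<Longrightarrow> set u \<subseteq> rnames_rexp E"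
proof (induction E arbitrary: u)
  case (RStar E)
  have "v \<in> star_lang (lang E) \<Longrightarrow> set v \<subseteq> rnames_rexp E" for v
    by (induction rule: star_lang.induct) (auto dest: RStar.IH)
  then show ?case using RStar.prems by simp
qed fastforce+

lemma cext_CAll_word_rexp:
  "cext I (CAll (word_rexp w) C) = {x \<in> dom I. word_int I w `` {x} \<subseteq> cext I C}"
  by (auto simp: rexp_int_def lang_word_rexp)

lemma is_model_subsumption_CName:
  "is_model J T \<Longrightarrow> (CName B, CName A) \<in> T \<Longrightarrow> cint J B \<subseteq> cint J A"
  unfolding is_model_def by fastforce

lemma is_model_subsumption_CAll_RAtom:
  assumes "is_model J T" and "(CName B, CAll (RAtom r) (CName B)) \<in> T"
  shows "rint J r `` cint J B \<subseteq> cint J B"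
proof -
  have "cint J B \<subseteq> cext J (CAll (RAtom r) (CName B))"
    using assms unfolding is_model_def by fastforce
  moreover have "rint J r \<subseteq> dom J \<times> dom J"
    using assms(1) by (simp add: is_model_def is_interp_def)
  ultimately show ?thesis
    by (fastforce simp: rexp_int_def)
qed

lemma word_int_Image_closed:
  assumes "closed_under_roles J R S" and "set w \<subseteq> R"
  shows "word_int J w `` S \<subseteq> S"
  using assms(2)
proof (induction w)
  case (Cons r w)
  then have "rint J r `` S \<subseteq> S"
    using assms(1) by (auto simp: closed_under_roles_def)
  with Cons show ?case
    by (auto simp: relcomp_Image)
qed auto

lemma cint_subset_cext_replace_bot:
  assumes J: "is_interp J"
    and closed: "closed_under_roles J R (cint J B)"
    and names: "\<forall>A\<in>N. cint J B \<subseteq> cint J A"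
  shows "cnames M \<subseteq> N \<Longrightarrow> rnames M \<subseteq> R \<Longrightarrow> cint J B \<subseteq> cext J (replace_bot B M)"
proof (induction M)
  case CTop
  then show ?case using J by (auto simp: is_interp_def)
next
  case (CAll E C)
  have "(x, y) \<in> rexp_int J E \<Longrightarrow> x \<in> cint J B \<Longrightarrow> y \<in> cint J B" for x y
  proof -
    assume "(x, y) \<in> rexp_int J E" "x \<in> cint J B"
    then obtain u where "u \<in> lang E" "(x, y) \<in> word_int J u"
      by (auto simp: rexp_int_def)
    moreover from \<open>u \<in> lang E\<close> have "set u \<subseteq> R"
      using set_subset_rnames_rexp_if_in_lang CAll.prems by fastforce
    ultimately show "y \<in> cint J B"
      using word_int_Image_closed[OF closed] \<open>x \<in> cint J B\<close> by blast
  qed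
  with CAll J show ?case by (auto simp: is_interp_def)
qed (use names in auto)

text \<open>The interpretation \<open>I\<close> is \<open>J\<close> with the closed set \<open>S\<close> removed; \<open>X\<close> plays the role of \<open>(M\<^sup>B)\<^sup>J\<close>.\<close>

lemma word_int_Image_removed_iff:
  assumes J: "is_interp J"
    and closed: "closed_under_roles J R S"
    and "S \<subseteq> X"
    and dom_I: "dom I = dom J - S"
    and rint_I: "\<And>r. rint I r = {(x, y) \<in> rint J r. x \<notin> S \<and> y \<notin> S}"
  shows "set w \<subseteq> R \<Longrightarrow> x \<in> dom J - S \<Longrightarrow>
    word_int I w `` {x} \<subseteq> X - S \<longleftrightarrow> word_int J w `` {x} \<subseteq> X"
proof (induction w arbitrary: x)
  case Nil
  then show ?case using dom_I by auto
next
  case (Cons r w)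
  then have w: "set w \<subseteq> R" by simp
  have IH: "word_int I w `` {z} \<subseteq> X - S \<longleftrightarrow> word_int J w `` {z} \<subseteq> X"
    if "(x, z) \<in> rint J r" "z \<notin> S" for z
  proof -
    have "z \<in> dom J" using J that(1) by (auto simp: is_interp_def)
    then show ?thesis using Cons.IH[OF w] that(2) by blast
  qed
  have from_S: "word_int J w `` {z} \<subseteq> X" if "z \<in> S" for z
    using word_int_Image_closed[OF closed w] that \<open>S \<subseteq> X\<close> by blast
  have "word_int J (r # w) `` {x} \<subseteq> X \<longleftrightarrow>
        (\<forall>z. (x, z) \<in> rint J r \<and> z \<notin> S \<longrightarrow> word_int J w `` {z} \<subseteq> X)"
    using from_S by fastforce
  also have "\<dots> \<longleftrightarrow> (\<forall>z. (x, z) \<in> rint I r \<longrightarrow> word_int I w `` {z} \<subseteq> X - S)"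
    using IH rint_I Cons.prems by auto
  also have "\<dots> \<longleftrightarrow> word_int I (r # w) `` {x} \<subseteq> X - S"
    by auto
  finally show ?case by simp
qed

theorem lemma6:
  fixes SigC :: "'c set" and SigR :: "'r set" and B :: 'c
    and J I :: "('c, 'r, 'd) interp"
  assumes "finite SigC" and "finite SigR" and "B \<notin> SigC"
    and "is_model J ({(CName B, CName A) | A. A \<in> SigC}
                     \<union> {(CName B, CAll (RAtom r) (CName B)) | r. r \<in> SigR})"
    and "dom I = dom J - cint J B"
    and "\<And>A. cint I A = cint J A - cint J B"
    and "\<And>r. rint I r = {(x, y) \<in> rint J r. x \<notin> cint J B \<and> y \<notin> cint J B}"
  shows "\<forall>(w :: 'r list) (M :: ('c, 'r) concept).
           set w \<subseteq> SigR \<and> cnames M \<subseteq> SigC \<and> rnames M \<subseteq> SigR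
           \<and> cext I M = cext J (replace_bot B M) - cint J B
           \<longrightarrow> cext I (CAll (word_rexp w) M)
               = cext J (CAll (word_rexp w) (replace_bot B M)) - cint J B"
proof (intro allI impI)
  fix w :: "'r list" and M :: "('c, 'r) concept"
  assume H: "set w \<subseteq> SigR \<and> cnames M \<subseteq> SigC \<and> rnames M \<subseteq> SigR
           \<and> cext I M = cext J (replace_bot B M) - cint J B"
  have J: "is_interp J"
    using assms(4) by (simp add: is_model_def)
  have names: "\<forall>A\<in>SigC. cint J B \<subseteq> cint J A"
    using is_model_subsumption_CName[OF assms(4)] by blast
  have closed: "closed_under_roles J SigR (cint J B)"
    unfolding closed_under_roles_def using is_model_subsumption_CAll_RAtom[OF assms(4)] by blast
  have "cint J B \<subseteq> cext J (replace_bot B M)"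
    using cint_subset_cext_replace_bot[OF J closed names] H by blast
  from word_int_Image_removed_iff[OF J closed this assms(5,7)] H
  show "cext I (CAll (word_rexp w) M)
          = cext J (CAll (word_rexp w) (replace_bot B M)) - cint J B"
    unfolding cext_CAll_word_rexp using assms(5) by auto
qed

end
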